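(* Let $X\subset\mathbb R^n\setminus\{0\}$ be a finite set such that $0$ lies in the interior of $\operatorname{conv}X$, no element of $X$ is a positive multiple of another element of $X$, and every $n+1$ points of $X$ are in good position. Then there are $k\ge 1$ pairwise disjoint subsets $X_1,\dots,X_k\subseteq X$ such that (i) each $X_i$ is the vertex set of a simplex whose relative interior contains $0$, and (ii) the linear spaces $\operatorname{span}X_1,\dots,\operatorname{span}X_k$ are linearly independent and their direct sum is $\mathbb R^n$.
   Context: The positive hull $\operatorname{pos}A$ is the set of nonnegative linear combinations of elements of $A$. A finite set $A\subset\mathbb R^n$ is in conical position if there is a hyperplane strictly separating $A$ from $0$ (equivalently $0\notin\operatorname{conv}A$) and no point of $A$ lies in the positive hull of the other points of $A$; it is in good position if it is not in conical position. A collection $X_1,\dots,X_k$ as in the conclusion is called a skeleton of $X$. *)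

theory Defs
  imports "HOL-Analysis.Analysis"
begin

definition pos_hull :: "'a::real_vector set \<Rightarrow> 'a set" where
  "pos_hull A = {y. \<exists>S u. finite S \<and> S \<subseteq> A \<and> (\<forall>x\<in>S. 0 \<le> u x) \<and> y = (\<Sum>x\<in>S. u x *\<^sub>R x)}"

definition conical_position :: "'a::euclidean_space set \<Rightarrow> bool" where
  "conical_position A \<longleftrightarrow>
     (\<exists>a b. a \<bullet> 0 < b \<and> (\<forall>x\<in>A. b < a \<bullet> x)) \<and>
     (\<forall>x\<in>A. x \<notin> pos_hull (A - {x}))"

definition good_position :: "'a::euclidean_space set \<Rightarrow> bool" where
  "good_position A \<longleftrightarrow> \<not> conical_position A"

end

theory Submission
  imports Defs
begin

text \<open>Call a finite family of disjoint blocks of X a partial skeleton if every block carries a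
  positive linear relation and every linear relation among the points of the blocks is, block by
  block, a multiple of these. Each block is then a simplex with 0 in its relative interior and the
  spans of the blocks are independent, so it suffices to find a partial skeleton spanning the
  space. Starting from the empty one, take a minimal set T of points outside the current span S
  having a positive combination in S; up to scaling this is the only combination of T lying in S.
  If it is 0, T becomes a new block. Otherwise its negative is a nonnegative combination of the
  blocks vanishing somewhere on each block. Every dependent subset of X is in good position,
  because a conical set extends to a conical set of n + 1 points; this forces the block meeting
  the support to have a single zero z0, and the rest of that block merges into T, which keeps the
  span and lowers the number of blocks.\<close>

section \<open>Positive hulls and conical position\<close>

lemma in_span_sum_scaleR: "A \<subseteq> B \<Longrightarrow> (\<Sum>x\<in>A. f x *\<^sub>R x) \<in> span B"
  by (auto intro: span_sum span_scale span_base)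

lemma sum_scaleR_if_subset:
  fixes \<alpha> :: "'a::real_vector \<Rightarrow> real"
  shows "finite A \<Longrightarrow> B \<subseteq> A \<Longrightarrow> (\<Sum>x\<in>A. (if x \<in> B then \<alpha> x else 0) *\<^sub>R x) = (\<Sum>x\<in>B. \<alpha> x *\<^sub>R x)"
  by (rule sum.mono_neutral_cong_right) auto

lemma pos_hull_finite:
  fixes A :: "'a::real_vector set"
  assumes "finite A"
  shows "pos_hull A = {y. \<exists>u. (\<forall>x\<in>A. 0 \<le> u x) \<and> y = (\<Sum>x\<in>A. u x *\<^sub>R x)}"
proof (intro set_eqI iffI; clarify?)
  fix y assume "y \<in> pos_hull A"
  then obtain S u where S: "finite S" "S \<subseteq> A" "\<forall>x\<in>S. 0 \<le> u x" and y: "y = (\<Sum>x\<in>S. u x *\<^sub>R x)"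
    unfolding pos_hull_def by blast
  have "(\<Sum>x\<in>A. (if x \<in> S then u x else 0) *\<^sub>R x) = (\<Sum>x\<in>S. u x *\<^sub>R x)"
    using assms S(2) by (rule sum_scaleR_if_subset)
  then have "y = (\<Sum>x\<in>A. (if x \<in> S then u x else 0) *\<^sub>R x)"
    using y by simp
  with S(3) show "\<exists>u. (\<forall>x\<in>A. 0 \<le> u x) \<and> y = (\<Sum>x\<in>A. u x *\<^sub>R x)"
    by (intro exI[of _ "\<lambda>x. if x \<in> S then u x else 0"]) auto
next
  fix u :: "'a \<Rightarrow> real" assume "\<forall>x\<in>A. 0 \<le> u x"
  then show "(\<Sum>x\<in>A. u x *\<^sub>R x) \<in> pos_hull A"
    using assms unfolding pos_hull_def by blast
qed

lemma pos_hull_subset_span: "pos_hull A \<subseteq> span A"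
  unfolding pos_hull_def by clarify (rule span_sum, rule span_scale, rule span_base, blast)

lemma pos_hull_UNIV_imp_span_UNIV: "pos_hull A = UNIV \<Longrightarrow> span A = UNIV"
  using pos_hull_subset_span by blast

lemma pos_hull_UNIV_if_interior_convex_hull:
  fixes X :: "'a::euclidean_space set"
  assumes "finite X" and "0 \<in> interior (convex hull X)"
  shows "pos_hull X = UNIV"
proof -
  obtain e where e: "e > 0" "ball 0 e \<subseteq> convex hull X"
    using assms(2) mem_interior by blast
  have "v \<in> pos_hull X" for v :: 'a
  proof (cases "v = 0")
    case True
    then show ?thesis
      unfolding pos_hull_finite[OF assms(1)] by (intro CollectI exI[of _ "\<lambda>_. 0"]) simp
  next
    case False
    define s where "s = e / (2 * norm v)"
    have s: "s > 0" "norm (s *\<^sub>R v) = e / 2"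
      using False e unfolding s_def by simp_all
    then have "s *\<^sub>R v \<in> ball 0 e"
      using e(1) by simp
    then have "s *\<^sub>R v \<in> convex hull X"
      using e(2) by blast
    then obtain u where u: "\<forall>x\<in>X. 0 \<le> u x" "(\<Sum>x\<in>X. u x *\<^sub>R x) = s *\<^sub>R v"
      unfolding convex_hull_finite[OF assms(1)] by auto
    have "(\<Sum>x\<in>X. (inverse s * u x) *\<^sub>R x) = inverse s *\<^sub>R (\<Sum>x\<in>X. u x *\<^sub>R x)"
      by (simp add: scaleR_sum_right)
    also have "\<dots> = v"
      using u(2) s(1) by simp
    finally show ?thesis
      using u(1) s(1) unfolding pos_hull_finite[OF assms(1)]
      by (intro CollectI exI[of _ "\<lambda>x. inverse s * u x"]) simp
  qed
  then show ?thesis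
    by blast
qed

lemma conical_position_subset:
  assumes "conical_position A" "B \<subseteq> A"
  shows "conical_position B"
proof -
  have "pos_hull (B - {x}) \<subseteq> pos_hull (A - {x})" for x
    using assms(2) unfolding pos_hull_def by blast
  then show ?thesis
    using assms unfolding conical_position_def by blast
qed

lemma pos_hull_insert_orthogonal:
  fixes A :: "'a::real_inner set"
  assumes q: "\<forall>w\<in>A. q \<bullet> w = 0" "q \<bullet> x \<noteq> 0" and z: "z \<in> A" "z \<in> pos_hull (insert x A - {z})"
  shows "z \<in> pos_hull (A - {z})"
proof -
  obtain S u where S: "finite S" "S \<subseteq> insert x A - {z}" "\<forall>s\<in>S. 0 \<le> u s"
    and zs: "z = (\<Sum>s\<in>S. u s *\<^sub>R s)"
    using z(2) unfolding pos_hull_def by blast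
  have "u x = 0" if "x \<in> S"
  proof -
    have "0 = q \<bullet> z"
      using q(1) z(1) by simp
    also have "\<dots> = u x * (q \<bullet> x) + (\<Sum>s\<in>S - {x}. u s * (q \<bullet> s))"
      unfolding zs inner_sum_right using that S(1) by (simp add: sum.remove)
    also have "(\<Sum>s\<in>S - {x}. u s * (q \<bullet> s)) = 0"
      using S(2) q(1) by (intro sum.neutral) auto
    finally show ?thesis
      using q(2) by simp
  qed
  then have "z = (\<Sum>s\<in>S - {x}. u s *\<^sub>R s)"
    using zs S(1) by (cases "x \<in> S") (simp_all add: sum.remove)
  then show ?thesis
    using S unfolding pos_hull_def by (intro CollectI exI[of _ "S - {x}"] exI[of _ u]) auto
qed

lemma conical_position_insert:
  fixes A :: "'a::euclidean_space set"
  assumes con: "conical_position A" and x: "x \<notin> span A"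
  shows "conical_position (insert x A)"
proof -
  obtain y q where y: "y \<in> span A" and q: "\<And>w. w \<in> span A \<Longrightarrow> orthogonal q w" and xyq: "x = y + q"
    using orthogonal_subspace_decomp_exists[of A x] by metis
  have qA: "q \<bullet> w = 0" if "w \<in> span A" for w
    using q[OF that] by (simp add: orthogonal_def)
  have qx: "q \<bullet> x = q \<bullet> q"
    using qA[OF y] xyq by (simp add: inner_add_right)
  have qq: "q \<bullet> q > 0"
    using x y xyq by auto
  obtain a b where ab: "a \<bullet> 0 < b" "\<forall>z\<in>A. b < a \<bullet> z"
    using con unfolding conical_position_def by blast
  \<comment> \<open>Tilting the separating functional along q keeps A on the far side and moves x there too.\<close>
  define a' where "a' = a + ((\<bar>b\<bar> + \<bar>a \<bullet> x\<bar> + 1) / (q \<bullet> q)) *\<^sub>R q"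
  have "b < a' \<bullet> x"
    using qq qx unfolding a'_def by (simp add: inner_add_left)
  moreover have "b < a' \<bullet> z" if "z \<in> A" for z
    using ab(2) that qA[of z] span_base[of z A] unfolding a'_def by (simp add: inner_add_left)
  ultimately have sep: "\<exists>a b. a \<bullet> 0 < b \<and> (\<forall>z\<in>insert x A. b < a \<bullet> z)"
    using ab(1) by (intro exI[of _ a'] exI[of _ b]) auto
  have "pos_hull (insert x A - {x}) \<subseteq> span A"
    using pos_hull_subset_span[of "insert x A - {x}"] span_mono[of "insert x A - {x}" A] by blast
  then have "x \<notin> pos_hull (insert x A - {x})"
    using x by blast
  moreover have "z \<notin> pos_hull (insert x A - {z})" if z: "z \<in> A" for z
  proof
    assume "z \<in> pos_hull (insert x A - {z})"
    moreover have "\<forall>w\<in>A. q \<bullet> w = 0"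
      using qA span_base by blast
    ultimately have "z \<in> pos_hull (A - {z})"
      using pos_hull_insert_orthogonal[of A q x z] z qx qq by simp
    then show False
      using con z unfolding conical_position_def by blast
  qed
  ultimately show ?thesis
    unfolding conical_position_def using sep by blast
qed

lemma conical_position_extend:
  fixes X :: "'a::euclidean_space set"
  assumes "span X = UNIV" and "conical_position A" and "A \<subseteq> X" and "finite A"
  shows "\<exists>A'. A \<subseteq> A' \<and> A' \<subseteq> X \<and> conical_position A' \<and> finite A' \<and>
    card A' + dim A = card A + DIM('a)"
  using assms(2-)
proof (induction "DIM('a) - dim A" arbitrary: A)
  case 0
  then have "dim A = DIM('a)"
    using dim_subset_UNIV[of A] by simp
  with 0 show ?case by auto
next
  case (Suc n)
  then have "span A \<noteq> UNIV"
    using dim_eq_full[of A] by auto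
  then obtain x where x: "x \<in> X" "x \<notin> span A"
    using assms(1) by (metis span_minimal subsetI subspace_span top.extremum_uniqueI)
  have xA: "x \<notin> A"
    using x span_base by blast
  have d: "dim (insert x A) = dim A + 1"
    using x by (simp add: dim_insert)
  have "n = DIM('a) - dim (insert x A)"
    using Suc.hyps(2) d by simp
  then obtain A' where "insert x A \<subseteq> A'" "A' \<subseteq> X" "conical_position A'" "finite A'"
     "card A' + dim (insert x A) = card (insert x A) + DIM('a)"
    using Suc.hyps(1) conical_position_insert[OF Suc.prems(1) x(2)] Suc.prems x by blast
  then show ?case
    using d xA Suc.prems by (intro exI[of _ A']) auto
qed

text \<open>A dependent set has more than dim A points, so a conical one would extend to a conical
  set of DIM('a) + 1 points.\<close>
lemma good_position_if_dependent:
  fixes X :: "'a::euclidean_space set"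
  assumes "span X = UNIV"
    and good: "\<forall>A. A \<subseteq> X \<and> card A = DIM('a) + 1 \<longrightarrow> good_position A"
    and "A \<subseteq> X" "finite A" "dependent A"
  shows "good_position A"
proof (rule ccontr)
  assume "\<not> good_position A"
  then obtain A' where A': "A' \<subseteq> X" "conical_position A'" "card A' + dim A = card A + DIM('a)"
    using conical_position_extend[OF assms(1)] assms(3,4) unfolding good_position_def by blast
  have "dim A < card A"
    using assms(4,5) dim_le_card[of A A] card_eq_dim[of A A] span_superset[of A]
    by (metis order_refl order_le_less)
  then have "DIM('a) + 1 \<le> card A'"
    using A'(3) by linarith
  then obtain B where "B \<subseteq> A'" "card B = DIM('a) + 1"
    by (meson obtain_subset_with_card_n)
  then show False
    using good A' conical_position_subset unfolding good_position_def by blast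
qed

lemma pos_hull_remove_if_good_position:
  fixes A :: "'a::euclidean_space set"
  assumes "finite A" "0 \<notin> convex hull A" "good_position A"
  shows "\<exists>x\<in>A. x \<in> pos_hull (A - {x})"
proof -
  have "closed (convex hull A)"
    using assms(1) by (simp add: compact_imp_closed finite_imp_compact compact_convex_hull)
  then obtain a b where "0 < b" "\<forall>x\<in>convex hull A. b < a \<bullet> x"
    using separating_hyperplane_closed_0[of "convex hull A"] assms(2) convex_convex_hull by blast
  then have "\<exists>a b. a \<bullet> 0 < b \<and> (\<forall>x\<in>A. b < a \<bullet> x)"
    using hull_subset[of A convex] by auto
  then show ?thesis
    using assms(3) unfolding good_position_def conical_position_def by blast
qed

lemma relation_if_pos_hull_remove:
  assumes "finite B" "b \<in> B" "b \<in> pos_hull (B - {b})"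
  shows "\<exists>\<gamma>. \<gamma> b = -1 \<and> (\<forall>y\<in>B - {b}. 0 \<le> \<gamma> y) \<and> (\<Sum>y\<in>B. \<gamma> y *\<^sub>R y) = 0"
proof -
  obtain u where u: "\<forall>y\<in>B - {b}. 0 \<le> u y" "b = (\<Sum>y\<in>B - {b}. u y *\<^sub>R y)"
    using assms(3) unfolding pos_hull_finite[OF finite_Diff[OF assms(1)]] by blast
  define \<gamma> where "\<gamma> = u(b := -1)"
  have "(\<Sum>y\<in>B. \<gamma> y *\<^sub>R y) = - b + (\<Sum>y\<in>B - {b}. u y *\<^sub>R y)"
    unfolding \<gamma>_def using assms(1,2) by (simp add: sum.remove)
  with u have "(\<Sum>y\<in>B. \<gamma> y *\<^sub>R y) = 0"
    by simp
  with u show ?thesis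
    by (intro exI[of _ \<gamma>]) (auto simp: \<gamma>_def)
qed

section \<open>Minimal positive combinations\<close>

lemma finite_minimal_subset:
  assumes "finite A" "P A"
  shows "\<exists>B\<subseteq>A. P B \<and> (\<forall>C\<subset>B. \<not> P C)"
  using assms
proof (induction A rule: finite_psubset_induct)
  case (psubset A)
  show ?case
  proof (cases "\<exists>C\<subset>A. P C")
    case True
    then obtain C where "C \<subset> A" "P C"
      by blast
    then show ?thesis
      using psubset.IH by (meson order.strict_implies_order order_trans)
  qed (use psubset.prems in blast)
qed

text \<open>Moving along g from l until the first coefficient on the positive side of g vanishes.\<close>
lemma positive_combination_shrink:
  fixes S :: "'a::real_vector set"
  assumes S: "subspace S" and T: "finite T" and l: "\<forall>t\<in>T. 0 < l t" "(\<Sum>t\<in>T. l t *\<^sub>R t) \<in> S"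
    and g: "(\<Sum>t\<in>T. g t *\<^sub>R t) \<in> S" "t1 \<in> T" "0 < g t1"
  shows "\<exists>T' l'. T' \<subset> T \<and> {t\<in>T. g t \<le> 0} \<subseteq> T' \<and> (\<forall>t\<in>T'. 0 < l' t) \<and> (\<Sum>t\<in>T'. l' t *\<^sub>R t) \<in> S"
proof -
  define Q where "Q = {t\<in>T. 0 < g t}"
  define e where "e = Min ((\<lambda>t. l t / g t) ` Q)"
  have "e \<in> (\<lambda>t. l t / g t) ` Q"
    unfolding e_def Q_def using T g(2,3) by (intro Min_in) auto
  then obtain t2 where t2: "t2 \<in> T" "0 < g t2" "e = l t2 / g t2"
    unfolding Q_def by blast
  have "0 < e"
    using t2 l(1) by simp
  define l' where "l' t = l t - e * g t" for t
  have l'_nonneg: "0 \<le> l' t" if "t \<in> T" for t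
  proof (cases "0 < g t")
    case True
    then have "e \<le> l t / g t"
      unfolding e_def Q_def using T that by (intro Min_le) auto
    then show ?thesis
      using True unfolding l'_def by (simp add: pos_le_divide_eq)
  next
    case False
    then show ?thesis
      using l(1) that \<open>0 < e\<close> unfolding l'_def by (smt (verit) mult_nonneg_nonpos)
  qed
  define T' where "T' = {t\<in>T. 0 < l' t}"
  have "(\<Sum>t\<in>T'. l' t *\<^sub>R t) = (\<Sum>t\<in>T. l' t *\<^sub>R t)"
    unfolding T'_def using T l'_nonneg by (intro sum.mono_neutral_left) (auto simp: order_le_less)
  also have "\<dots> = (\<Sum>t\<in>T. l t *\<^sub>R t) - e *\<^sub>R (\<Sum>t\<in>T. g t *\<^sub>R t)"
    unfolding l'_def by (simp add: scaleR_left_diff_distrib sum_subtractf scaleR_sum_right)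
  also have "\<dots> \<in> S"
    using S l(2) g(1) by (simp add: subspace_diff subspace_scale)
  finally have "(\<Sum>t\<in>T'. l' t *\<^sub>R t) \<in> S" .
  moreover have "t2 \<notin> T'"
    using t2 unfolding T'_def l'_def by simp
  moreover have "{t\<in>T. g t \<le> 0} \<subseteq> T'"
  proof
    fix t assume t: "t \<in> {t\<in>T. g t \<le> 0}"
    then have "e * g t \<le> 0"
      using \<open>0 < e\<close> by (simp add: mult_nonneg_nonpos)
    then show "t \<in> T'"
      using t l(1) unfolding T'_def l'_def by auto
  qed
  ultimately show ?thesis
    using t2(1) by (intro exI[of _ T'] exI[of _ l']) (auto simp: T'_def)
qed

lemma minimal_positive_combination_unique:
  fixes S :: "'a::real_vector set"
  assumes S: "subspace S" and T: "finite T" and l: "\<forall>t\<in>T. 0 < l t" "(\<Sum>t\<in>T. l t *\<^sub>R t) \<in> S"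
    and minimal: "\<And>T' l'. T' \<subset> T \<Longrightarrow> T' \<noteq> {} \<Longrightarrow> \<forall>t\<in>T'. 0 < l' t \<Longrightarrow> (\<Sum>t\<in>T'. l' t *\<^sub>R t) \<notin> S"
    and \<alpha>: "(\<Sum>t\<in>T. \<alpha> t *\<^sub>R t) \<in> S"
  shows "\<exists>c. \<forall>t\<in>T. \<alpha> t = c * l t"
proof (rule ccontr)
  assume not_multiple: "\<not> ?thesis"
  then obtain t0 where t0: "t0 \<in> T"
    by blast
  define g where "g t = \<alpha> t - \<alpha> t0 / l t0 * l t" for t
  have "g t0 = 0"
    using l(1) t0 unfolding g_def by force
  obtain t1 where "t1 \<in> T" "g t1 \<noteq> 0"
    using not_multiple unfolding g_def by (metis eq_iff_diff_eq_0)
  have "(\<Sum>t\<in>T. g t *\<^sub>R t) = (\<Sum>t\<in>T. \<alpha> t *\<^sub>R t) - (\<alpha> t0 / l t0) *\<^sub>R (\<Sum>t\<in>T. l t *\<^sub>R t)"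
    unfolding g_def by (simp add: scaleR_left_diff_distrib sum_subtractf scaleR_sum_right)
  then have g_S: "(\<Sum>t\<in>T. g t *\<^sub>R t) \<in> S"
    using S \<alpha> l(2) by (simp add: subspace_diff subspace_scale)
  obtain h where h: "(\<Sum>t\<in>T. h t *\<^sub>R t) \<in> S" "0 < h t1" "h t0 = 0"
  proof (cases "0 < g t1")
    case False
    then show ?thesis
      using that[of "\<lambda>t. - g t"] g_S \<open>g t1 \<noteq> 0\<close> \<open>g t0 = 0\<close> S
      by (simp add: sum_negf subspace_neg)
  qed (use that g_S \<open>g t0 = 0\<close> in blast)
  then obtain T' l' where "T' \<subset> T" "{t\<in>T. h t \<le> 0} \<subseteq> T'" "\<forall>t\<in>T'. 0 < l' t" "(\<Sum>t\<in>T'. l' t *\<^sub>R t) \<in> S"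
    using positive_combination_shrink[OF S T l h(1) \<open>t1 \<in> T\<close>] by blast
  moreover have "t0 \<in> T'"
    using calculation(2) t0 h(3) by auto
  ultimately show False
    using minimal by blast
qed

section \<open>Partial skeletons\<close>

text \<open>\<rho> gives the positive relation on each block; a partial skeleton whose union spans the
  space is a skeleton in the sense of the theorem.\<close>
definition partial_skeleton :: "'a::real_vector set set \<Rightarrow> ('a \<Rightarrow> real) \<Rightarrow> bool" where
  "partial_skeleton F \<rho> \<longleftrightarrow> finite F \<and> (\<forall>C\<in>F. finite C \<and> C \<noteq> {}) \<and> disjoint F \<and>
     (\<forall>x\<in>\<Union>F. 0 < \<rho> x) \<and> (\<forall>C\<in>F. (\<Sum>x\<in>C. \<rho> x *\<^sub>R x) = 0) \<and>
     (\<forall>\<alpha>. (\<Sum>x\<in>\<Union>F. \<alpha> x *\<^sub>R x) = 0 \<longrightarrow> (\<forall>C\<in>F. \<exists>c. \<forall>x\<in>C. \<alpha> x = c * \<rho> x))"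

lemma partial_skeletonD:
  assumes "partial_skeleton F \<rho>"
  shows partial_skeleton_finite: "finite F"
    and partial_skeleton_finite_block: "C \<in> F \<Longrightarrow> finite C"
    and partial_skeleton_block_nonempty: "C \<in> F \<Longrightarrow> C \<noteq> {}"
    and partial_skeleton_disjoint: "C \<in> F \<Longrightarrow> D \<in> F \<Longrightarrow> C \<noteq> D \<Longrightarrow> C \<inter> D = {}"
    and partial_skeleton_pos: "x \<in> \<Union>F \<Longrightarrow> 0 < \<rho> x"
    and partial_skeleton_block_sum: "C \<in> F \<Longrightarrow> (\<Sum>x\<in>C. \<rho> x *\<^sub>R x) = 0"
    and partial_skeleton_relation:
      "(\<Sum>x\<in>\<Union>F. \<alpha> x *\<^sub>R x) = 0 \<Longrightarrow> C \<in> F \<Longrightarrow> \<exists>c. \<forall>x\<in>C. \<alpha> x = c * \<rho> x"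
  using assms unfolding partial_skeleton_def disjoint_def by auto

definition block_of :: "'a set set \<Rightarrow> 'a \<Rightarrow> 'a set" where
  "block_of F x = (THE C. C \<in> F \<and> x \<in> C)"

lemma block_of_eq: "partial_skeleton F \<rho> \<Longrightarrow> C \<in> F \<Longrightarrow> x \<in> C \<Longrightarrow> block_of F x = C"
  unfolding block_of_def by (rule the_equality) (auto dest: partial_skeleton_disjoint)

lemma partial_skeleton_empty: "partial_skeleton {} \<rho>"
  unfolding partial_skeleton_def by simp

lemma finite_Union_partial_skeleton: "partial_skeleton F \<rho> \<Longrightarrow> finite (\<Union>F)"
  using partial_skeleton_finite partial_skeleton_finite_block by blast

lemma sum_Union_partial_skeleton:
  assumes "partial_skeleton F \<rho>"
  shows "(\<Sum>x\<in>\<Union>F. g x) = (\<Sum>C\<in>F. \<Sum>x\<in>C. g x)"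
  using sum.Union_disjoint[of F g] partial_skeleton_finite_block[OF assms]
    partial_skeleton_disjoint[OF assms] by (simp add: o_def)

lemma partial_skeleton_subfamily_relation:
  assumes F: "partial_skeleton F \<rho>" and "G \<subseteq> F" and \<alpha>: "(\<Sum>x\<in>\<Union>G. \<alpha> x *\<^sub>R x) = 0" and "C \<in> G"
  shows "\<exists>c. \<forall>x\<in>C. \<alpha> x = c * \<rho> x"
proof -
  have extended: "(\<Sum>x\<in>\<Union>F. (if x \<in> \<Union>G then \<alpha> x else 0) *\<^sub>R x) = 0"
    using \<alpha> finite_Union_partial_skeleton[OF F] assms(2) by (subst sum_scaleR_if_subset) auto
  obtain c where "\<forall>x\<in>C. (if x \<in> \<Union>G then \<alpha> x else 0) = c * \<rho> x"
    using partial_skeleton_relation[OF F extended] assms(2,4) by blast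
  then show ?thesis
    using assms(4) by (metis UnionI)
qed

lemma partial_skeleton_Diff:
  assumes F: "partial_skeleton F \<rho>"
  shows "partial_skeleton (F - {C}) \<rho>"
proof -
  have "\<forall>\<alpha>. (\<Sum>x\<in>\<Union>(F - {C}). \<alpha> x *\<^sub>R x) = 0 \<longrightarrow> (\<forall>D\<in>F - {C}. \<exists>c. \<forall>x\<in>D. \<alpha> x = c * \<rho> x)"
    using partial_skeleton_subfamily_relation[OF F, of "F - {C}"] by blast
  moreover have "disjoint (F - {C})"
    using F unfolding partial_skeleton_def by (simp add: pairwise_subset[of _ F])
  ultimately show ?thesis
    using F unfolding partial_skeleton_def by auto
qed

definition positive_circuit_modulo :: "'a::real_vector set \<Rightarrow> 'a set \<Rightarrow> ('a \<Rightarrow> real) \<Rightarrow> bool" where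
  "positive_circuit_modulo S T l \<longleftrightarrow> finite T \<and> 2 \<le> card T \<and> (\<forall>t\<in>T. 0 < l t) \<and>
     (\<Sum>t\<in>T. l t *\<^sub>R t) \<in> span S \<and> (\<forall>\<alpha>. (\<Sum>t\<in>T. \<alpha> t *\<^sub>R t) \<in> span S \<longrightarrow> (\<exists>c. \<forall>t\<in>T. \<alpha> t = c * l t))"

lemma positive_circuit_moduloD:
  assumes "positive_circuit_modulo S T l"
  shows positive_circuit_modulo_finite: "finite T"
    and positive_circuit_modulo_card: "2 \<le> card T"
    and positive_circuit_modulo_pos: "t \<in> T \<Longrightarrow> 0 < l t"
    and positive_circuit_modulo_in_span: "(\<Sum>t\<in>T. l t *\<^sub>R t) \<in> span S"
    and positive_circuit_modulo_unique: "(\<Sum>t\<in>T. \<alpha> t *\<^sub>R t) \<in> span S \<Longrightarrow> \<exists>c. \<forall>t\<in>T. \<alpha> t = c * l t"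
  using assms unfolding positive_circuit_modulo_def by blast+

lemma positive_circuit_modulo_cong:
  "(\<And>t. t \<in> T \<Longrightarrow> l t = l' t) \<Longrightarrow> positive_circuit_modulo S T l = positive_circuit_modulo S T l'"
  unfolding positive_circuit_modulo_def by (simp cong: sum.cong)

lemma partial_skeleton_insert:
  assumes F: "partial_skeleton F \<rho>" and T: "positive_circuit_modulo (\<Union>F) T l" "T \<inter> \<Union>F = {}"
    and zero: "(\<Sum>t\<in>T. l t *\<^sub>R t) = 0"
  shows "partial_skeleton (insert T F) (\<lambda>x. if x \<in> T then l x else \<rho> x)"
    (is "partial_skeleton _ ?\<rho>")
proof -
  have relation: "\<forall>C\<in>insert T F. \<exists>c. \<forall>x\<in>C. \<alpha> x = c * ?\<rho> x"
    if \<alpha>: "(\<Sum>x\<in>\<Union>(insert T F). \<alpha> x *\<^sub>R x) = 0" for \<alpha>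
  proof -
    have "(\<Sum>x\<in>T. \<alpha> x *\<^sub>R x) + (\<Sum>x\<in>\<Union>F. \<alpha> x *\<^sub>R x) = (\<Sum>x\<in>\<Union>(insert T F). \<alpha> x *\<^sub>R x)"
      using sum.union_disjoint[OF positive_circuit_modulo_finite[OF T(1)] finite_Union_partial_skeleton[OF F] T(2),
        of "\<lambda>x. \<alpha> x *\<^sub>R x"] by simp
    then have sum: "(\<Sum>x\<in>T. \<alpha> x *\<^sub>R x) = - (\<Sum>x\<in>\<Union>F. \<alpha> x *\<^sub>R x)"
      using \<alpha> by (simp add: eq_neg_iff_add_eq_0)
    also have "\<dots> \<in> span (\<Union>F)"
      by (intro span_neg in_span_sum_scaleR) simp
    finally obtain c where c: "\<forall>t\<in>T. \<alpha> t = c * l t"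
      using positive_circuit_modulo_unique[OF T(1)] by blast
    then have "(\<Sum>x\<in>T. \<alpha> x *\<^sub>R x) = c *\<^sub>R (\<Sum>t\<in>T. l t *\<^sub>R t)"
      by (simp add: scaleR_sum_right)
    then have "(\<Sum>x\<in>\<Union>F. \<alpha> x *\<^sub>R x) = 0"
      using sum zero by simp
    then have "\<forall>C\<in>F. \<exists>c. \<forall>x\<in>C. \<alpha> x = c * \<rho> x"
      using partial_skeleton_relation[OF F] by blast
    moreover have "\<forall>C\<in>F. \<forall>x\<in>C. ?\<rho> x = \<rho> x"
      using T(2) by auto
    ultimately show ?thesis
      using c by auto
  qed
  have "(\<Sum>x\<in>C. ?\<rho> x *\<^sub>R x) = (\<Sum>x\<in>C. \<rho> x *\<^sub>R x)" if "C \<in> F" for C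
    using T(2) that by (intro sum.cong) auto
  moreover have "T \<noteq> {}"
    using positive_circuit_modulo_card[OF T(1)] by auto
  ultimately show ?thesis
    using F T zero relation positive_circuit_modulo_finite[OF T(1)] positive_circuit_modulo_pos[OF T(1)]
    unfolding partial_skeleton_def disjoint_def by auto
qed

text \<open>Subtracting from each block the largest multiple of \<rho> that keeps the coefficients
  nonnegative.\<close>
lemma partial_skeleton_nonneg_representation:
  assumes F: "partial_skeleton F \<rho>" and w: "w \<in> span (\<Union>F)"
  shows "\<exists>\<beta>. (\<Sum>x\<in>\<Union>F. \<beta> x *\<^sub>R x) = w \<and> (\<forall>x\<in>\<Union>F. 0 \<le> \<beta> x) \<and> (\<forall>C\<in>F. \<exists>z\<in>C. \<beta> z = 0)"
proof -
  obtain \<beta>0 where \<beta>0: "(\<Sum>x\<in>\<Union>F. \<beta>0 x *\<^sub>R x) = w"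
    using w span_finite[OF finite_Union_partial_skeleton[OF F]] by auto
  define m where "m C = Min ((\<lambda>y. \<beta>0 y / \<rho> y) ` C)" for C
  define \<beta> where "\<beta> x = \<beta>0 x - m (block_of F x) * \<rho> x" for x
  note block = block_of_eq[OF F]
  have "(\<Sum>x\<in>\<Union>F. (m (block_of F x) * \<rho> x) *\<^sub>R x) = (\<Sum>C\<in>F. \<Sum>x\<in>C. (m C * \<rho> x) *\<^sub>R x)"
    using block by (simp add: sum_Union_partial_skeleton[OF F])
  also have "\<dots> = (\<Sum>C\<in>F. m C *\<^sub>R (\<Sum>x\<in>C. \<rho> x *\<^sub>R x))"
    by (simp add: scaleR_sum_right)
  also have "\<dots> = 0"
    using partial_skeleton_block_sum[OF F] by simp
  finally have "(\<Sum>x\<in>\<Union>F. \<beta> x *\<^sub>R x) = w"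
    using \<beta>0 unfolding \<beta>_def by (simp add: scaleR_left_diff_distrib sum_subtractf)
  moreover have "0 \<le> \<beta> x" if "C \<in> F" "x \<in> C" for C x
  proof -
    have "m C \<le> \<beta>0 x / \<rho> x"
      unfolding m_def using that partial_skeleton_finite_block[OF F] by (intro Min_le) auto
    moreover have "0 < \<rho> x"
      using partial_skeleton_pos[OF F] that by blast
    ultimately show ?thesis
      using block[OF that] unfolding \<beta>_def by (simp add: pos_le_divide_eq)
  qed
  moreover have "\<exists>z\<in>C. \<beta> z = 0" if C: "C \<in> F" for C
  proof -
    have "m C \<in> (\<lambda>y. \<beta>0 y / \<rho> y) ` C"
      unfolding m_def using C partial_skeleton_finite_block[OF F] partial_skeleton_block_nonempty[OF F]
      by (intro Min_in) auto
    then obtain z where z: "z \<in> C" "m C = \<beta>0 z / \<rho> z"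
      by blast
    moreover have "0 < \<rho> z"
      using partial_skeleton_pos[OF F] C z by blast
    ultimately show ?thesis
      using block[OF C] unfolding \<beta>_def by (intro bexI[of _ z]) auto
  qed
  ultimately show ?thesis
    by blast
qed

lemma partial_skeleton_block_simplex:
  fixes F :: "'a::euclidean_space set set"
  assumes F: "partial_skeleton F \<rho>" and C: "C \<in> F"
  shows "\<not> affine_dependent C \<and> 0 \<in> rel_interior (convex hull C)"
proof -
  have finC: "finite C" and pos: "\<forall>x\<in>C. 0 < \<rho> x"
    using partial_skeleton_finite_block[OF F C] partial_skeleton_pos[OF F] C by auto
  have relation: "\<exists>c. \<forall>x\<in>C. a x = c * \<rho> x" if "(\<Sum>x\<in>C. a x *\<^sub>R x) = 0" for a
    using partial_skeleton_subfamily_relation[OF F, of "{C}"] that C by simp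
  have "sum \<rho> C > 0"
    using finC partial_skeleton_block_nonempty[OF F C] pos by (intro sum_pos) auto
  have indep: "\<not> affine_dependent C"
  proof
    assume "affine_dependent C"
    then obtain U where U: "sum U C = 0" "\<exists>v\<in>C. U v \<noteq> 0" "(\<Sum>v\<in>C. U v *\<^sub>R v) = 0"
      unfolding affine_dependent_explicit_finite[OF finC] by blast
    obtain c where c: "\<forall>x\<in>C. U x = c * \<rho> x"
      using relation[OF U(3)] by blast
    then have "sum U C = c * sum \<rho> C"
      by (simp add: sum_distrib_left)
    then show False
      using U(1,2) c \<open>sum \<rho> C > 0\<close> by simp
  qed
  define u where "u x = \<rho> x / sum \<rho> C" for x
  have "(\<Sum>x\<in>C. u x *\<^sub>R x) = (1 / sum \<rho> C) *\<^sub>R (\<Sum>x\<in>C. \<rho> x *\<^sub>R x)"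
    unfolding u_def by (simp add: scaleR_sum_right)
  then have "(\<Sum>x\<in>C. u x *\<^sub>R x) = 0"
    using partial_skeleton_block_sum[OF F C] by simp
  moreover have "\<forall>x\<in>C. 0 < u x" "sum u C = 1"
    unfolding u_def using pos \<open>sum \<rho> C > 0\<close> by (simp_all add: sum_divide_distrib[symmetric])
  ultimately show ?thesis
    unfolding rel_interior_convex_hull_explicit[OF indep] using indep by blast
qed

lemma partial_skeleton_span_independent:
  assumes F: "partial_skeleton F \<rho>" and w: "\<forall>C\<in>F. w C \<in> span C" and sum: "(\<Sum>C\<in>F. w C) = 0"
  shows "\<forall>C\<in>F. w C = 0"
proof -
  obtain a where a: "\<forall>C\<in>F. w C = (\<Sum>x\<in>C. a C x *\<^sub>R x)"
    using w span_finite[OF partial_skeleton_finite_block[OF F]] by (auto simp: image_iff) metis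
  define \<alpha> where "\<alpha> x = a (block_of F x) x" for x
  note block = block_of_eq[OF F]
  have w_block: "w C = (\<Sum>x\<in>C. \<alpha> x *\<^sub>R x)" if "C \<in> F" for C
    using a that block unfolding \<alpha>_def by simp
  have relation: "(\<Sum>x\<in>\<Union>F. \<alpha> x *\<^sub>R x) = 0"
    using sum w_block by (simp add: sum_Union_partial_skeleton[OF F])
  show ?thesis
  proof
    fix C assume C: "C \<in> F"
    obtain c where "\<forall>x\<in>C. \<alpha> x = c * \<rho> x"
      using partial_skeleton_relation[OF F relation C] by blast
    then have "w C = c *\<^sub>R (\<Sum>x\<in>C. \<rho> x *\<^sub>R x)"
      using w_block[OF C] by (simp add: scaleR_sum_right)
    then show "w C = 0"
      using partial_skeleton_block_sum[OF F C] by simp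
  qed
qed

lemma partial_skeleton_indexed_span_independent:
  assumes F: "partial_skeleton F \<rho>" and h: "bij_betw h {..<k} F"
    and v: "\<forall>i<k. v i \<in> span (h i)" "(\<Sum>i<k. v i) = 0"
  shows "\<forall>i<k. v i = 0"
proof -
  define w where "w C = v (the_inv_into {..<k} h C)" for C
  have w: "w (h i) = v i" if "i < k" for i
    unfolding w_def using the_inv_into_f_f[OF bij_betw_imp_inj_on[OF h]] that by simp
  have "\<forall>C\<in>F. w C \<in> span C"
    using v(1) w h unfolding bij_betw_def by auto
  moreover have "(\<Sum>C\<in>F. w C) = 0"
    using sum.reindex_bij_betw[OF h, of w] w v(2) by simp
  ultimately have "\<forall>C\<in>F. w C = 0"
    by (rule partial_skeleton_span_independent[OF F])
  then show ?thesis
    using w h unfolding bij_betw_def by force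
qed

lemma partial_skeleton_enumerate:
  fixes F :: "'a::euclidean_space set set"
  assumes F: "partial_skeleton F \<rho>" "span (\<Union>F) = UNIV"
  obtains k :: nat and Xs where "1 \<le> k" "\<forall>i<k. Xs i \<in> F" "(\<Union>i<k. Xs i) = \<Union>F"
    "\<forall>i<k. \<forall>j<k. i \<noteq> j \<longrightarrow> Xs i \<inter> Xs j = {}"
    "\<forall>v. (\<forall>i<k. v i \<in> span (Xs i)) \<and> (\<Sum>i<k. v i) = 0 \<longrightarrow> (\<forall>i<k. v i = 0)"
proof -
  obtain h where h: "bij_betw h {..<card F} F"
    using ex_bij_betw_nat_finite[OF partial_skeleton_finite[OF F(1)]] by (auto simp: atLeast0LessThan)
  have "F \<noteq> {}"
  proof
    assume "F = {}"
    then have "(UNIV :: 'a set) = {0}"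
      using F(2) by simp
    then show False
      using nonzero_Basis SOME_Basis by (metis UNIV_I singletonD)
  qed
  then have "1 \<le> card F"
    using partial_skeleton_finite[OF F(1)] by (simp add: Suc_le_eq card_gt_0_iff)
  moreover have hF: "\<forall>i<card F. h i \<in> F"
    using bij_betwE[OF h] by blast
  moreover have "(\<Union>i<card F. h i) = \<Union>F"
    using bij_betw_imp_surj_on[OF h] by blast
  moreover have "\<forall>i<card F. \<forall>j<card F. i \<noteq> j \<longrightarrow> h i \<inter> h j = {}"
  proof (intro allI impI)
    fix i j assume "i < card F" "j < card F" "i \<noteq> j"
    then show "h i \<inter> h j = {}"
      using partial_skeleton_disjoint[OF F(1)] hF bij_betw_imp_inj_on[OF h]
      by (simp add: inj_on_eq_iff)
  qed
  moreover have "\<forall>v. (\<forall>i<card F. v i \<in> span (h i)) \<and> (\<Sum>i<card F. v i) = 0 \<longrightarrow> (\<forall>i<card F. v i = 0)"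
    using partial_skeleton_indexed_span_independent[OF F(1) h] by blast
  ultimately show ?thesis
    by (rule that)
qed

lemma partial_skeleton_Union_Diff:
  "partial_skeleton F \<rho> \<Longrightarrow> C \<in> F \<Longrightarrow> \<Union>(F - {C}) = \<Union>F - C"
  using partial_skeleton_disjoint by blast

lemma sum_Union_partial_skeleton_split:
  assumes "partial_skeleton F \<rho>" "C \<in> F"
  shows "(\<Sum>x\<in>\<Union>F. f x) = (\<Sum>x\<in>C. f x) + (\<Sum>x\<in>\<Union>(F - {C}). f x)"
proof -
  have "\<Union>F = C \<union> \<Union>(F - {C})"
    using assms(2) by blast
  then show ?thesis
    using sum.union_disjoint[of C "\<Union>(F - {C})" f] partial_skeleton_Union_Diff[OF assms]
      finite_Union_partial_skeleton[OF partial_skeleton_Diff[OF assms(1)]]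
      partial_skeleton_finite_block[OF assms] finite_Union_partial_skeleton[OF assms(1)] by auto
qed

lemma partial_skeleton_merged_sum:
  assumes F: "partial_skeleton F \<rho>" and C0: "C0 \<in> F" "z0 \<in> C0"
    and T: "finite T" "T \<inter> \<Union>F = {}"
    and \<beta>: "(\<Sum>x\<in>\<Union>F. \<beta> x *\<^sub>R x) = - (\<Sum>t\<in>T. l t *\<^sub>R t)" "\<beta> z0 = 0"
  shows "(\<Sum>x\<in>T \<union> (C0 - {z0}). (if x \<in> T then l x else \<beta> x) *\<^sub>R x) = - (\<Sum>x\<in>\<Union>(F - {C0}). \<beta> x *\<^sub>R x)"
proof -
  have finC0: "finite C0"
    using partial_skeleton_finite_block[OF F C0(1)] .
  have TC0: "T \<inter> (C0 - {z0}) = {}"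
    using T(2) C0(1) by blast
  have "(\<Sum>x\<in>C0 - {z0}. \<beta> x *\<^sub>R x) = (\<Sum>x\<in>C0. \<beta> x *\<^sub>R x)"
    using sum.remove[OF finC0 C0(2), of "\<lambda>x. \<beta> x *\<^sub>R x"] \<beta>(2) by simp
  moreover have "(\<Sum>x\<in>T. (if x \<in> T then l x else \<beta> x) *\<^sub>R x) = (\<Sum>t\<in>T. l t *\<^sub>R t)"
    by simp
  moreover have "(\<Sum>x\<in>C0 - {z0}. (if x \<in> T then l x else \<beta> x) *\<^sub>R x) = (\<Sum>x\<in>C0 - {z0}. \<beta> x *\<^sub>R x)"
    using TC0 by (intro sum.cong) auto
  ultimately show ?thesis
    using sum.union_disjoint[OF T(1) _ TC0, of "\<lambda>x. (if x \<in> T then l x else \<beta> x) *\<^sub>R x"] finC0 \<beta>(1)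
      sum_Union_partial_skeleton_split[OF F C0(1), of "\<lambda>x. \<beta> x *\<^sub>R x"]
    by (simp add: algebra_simps eq_neg_iff_add_eq_0)
qed

lemma partial_skeleton_in_span_block_remove:
  assumes F: "partial_skeleton F \<rho>" and "C \<in> F" "z \<in> C"
  shows "z \<in> span (C - {z})"
proof -
  have "\<rho> z *\<^sub>R z + (\<Sum>x\<in>C - {z}. \<rho> x *\<^sub>R x) = 0"
    using partial_skeleton_block_sum[OF F assms(2)] sum.remove[OF partial_skeleton_finite_block[OF F assms(2)] assms(3), of "\<lambda>x. \<rho> x *\<^sub>R x"]
    by simp
  then have sum: "\<rho> z *\<^sub>R z = - (\<Sum>x\<in>C - {z}. \<rho> x *\<^sub>R x)"
    by (simp add: eq_neg_iff_add_eq_0)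
  have "0 < \<rho> z"
    using partial_skeleton_pos[OF F, of z] assms(2,3) by blast
  then have "z = (1 / \<rho> z) *\<^sub>R (\<rho> z *\<^sub>R z)"
    by simp
  also have "\<dots> \<in> span (C - {z})"
    unfolding sum by (intro span_scale span_neg in_span_sum_scaleR) simp
  finally show ?thesis .
qed

section \<open>Merging a circuit into a partial skeleton\<close>

lemma exists_max_ratio:
  fixes \<beta> \<rho> :: "'a \<Rightarrow> real"
  assumes "finite C" "x1 \<in> C" "0 < \<beta> x1" "\<forall>x\<in>C. 0 < \<rho> x"
  obtains r s where "0 < r" "s \<in> C" "\<beta> s = r * \<rho> s" "\<forall>x\<in>C. \<beta> x \<le> r * \<rho> x"
proof -
  define r where "r = Max ((\<lambda>x. \<beta> x / \<rho> x) ` C)"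
  have "r \<in> (\<lambda>x. \<beta> x / \<rho> x) ` C"
    unfolding r_def using assms(1,2) by (intro Max_in) auto
  then obtain s where "s \<in> C" "\<beta> s / \<rho> s = r"
    by blast
  moreover have max: "\<beta> x / \<rho> x \<le> r" if "x \<in> C" for x
    unfolding r_def using assms(1) that by (intro Max_ge) auto
  moreover have "0 < \<beta> x1 / \<rho> x1"
    using assms(2-4) by simp
  ultimately show ?thesis
    using that[of r s] max[OF assms(2)] assms(4) by (auto simp: pos_divide_le_eq)
qed

lemma partial_skeleton_shift_relation:
  assumes F: "partial_skeleton F \<rho>" "C0 \<in> F" and T: "finite T" "T \<inter> \<Union>F = {}"
    and \<beta>: "(\<Sum>x\<in>\<Union>F. \<beta> x *\<^sub>R x) = - (\<Sum>t\<in>T. l t *\<^sub>R t)"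
  shows "(\<Sum>x\<in>T \<union> \<Union>F. (if x \<in> T then l x else if x \<in> C0 then \<beta> x - r * \<rho> x else \<beta> x) *\<^sub>R x) = 0"
    (is "(\<Sum>x\<in>T \<union> \<Union>F. ?R x *\<^sub>R x) = 0")
proof -
  have finU: "finite (\<Union>F)" and C0U: "C0 \<subseteq> \<Union>F"
    using finite_Union_partial_skeleton[OF F(1)] F(2) by auto
  have "(\<Sum>x\<in>\<Union>F. ?R x *\<^sub>R x) = (\<Sum>x\<in>\<Union>F. \<beta> x *\<^sub>R x) - (\<Sum>x\<in>\<Union>F. (if x \<in> C0 then r * \<rho> x else 0) *\<^sub>R x)"
    unfolding sum_subtractf[symmetric] using T(2) by (intro sum.cong) (auto simp: scaleR_left_diff_distrib)
  also have "(\<Sum>x\<in>\<Union>F. (if x \<in> C0 then r * \<rho> x else 0) *\<^sub>R x) = r *\<^sub>R (\<Sum>x\<in>C0. \<rho> x *\<^sub>R x)"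
    using finU C0U by (simp add: sum_scaleR_if_subset scaleR_sum_right)
  finally have "(\<Sum>x\<in>\<Union>F. ?R x *\<^sub>R x) = - (\<Sum>x\<in>T. ?R x *\<^sub>R x)"
    using \<beta> partial_skeleton_block_sum[OF F] by simp
  then show ?thesis
    using sum.union_disjoint[OF T(1) finU T(2), of "\<lambda>x. ?R x *\<^sub>R x"] by simp
qed

lemma partial_skeleton_extension_relation:
  assumes F: "partial_skeleton F \<rho>" and T: "positive_circuit_modulo (\<Union>F) T R" "T \<inter> \<Union>F = {}"
    and R: "(\<Sum>x\<in>T \<union> \<Union>F. R x *\<^sub>R x) = 0" and \<alpha>: "(\<Sum>x\<in>T \<union> \<Union>F. \<alpha> x *\<^sub>R x) = 0"
  shows "\<exists>c. (\<forall>t\<in>T. \<alpha> t = c * R t) \<and> (\<forall>C\<in>F. \<exists>d. \<forall>x\<in>C. \<alpha> x - c * R x = d * \<rho> x)"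
proof -
  have split: "(\<Sum>x\<in>T \<union> \<Union>F. f x *\<^sub>R x) = (\<Sum>x\<in>T. f x *\<^sub>R x) + (\<Sum>x\<in>\<Union>F. f x *\<^sub>R x)" for f
    using sum.union_disjoint[OF positive_circuit_modulo_finite[OF T(1)] finite_Union_partial_skeleton[OF F] T(2)]
    by simp
  have "(\<Sum>x\<in>T. \<alpha> x *\<^sub>R x) = - (\<Sum>x\<in>\<Union>F. \<alpha> x *\<^sub>R x)"
    using \<alpha> split[of \<alpha>] by (simp add: eq_neg_iff_add_eq_0)
  also have "\<dots> \<in> span (\<Union>F)"
    by (intro span_neg in_span_sum_scaleR) simp
  finally obtain c where c: "\<forall>t\<in>T. \<alpha> t = c * R t"
    using positive_circuit_modulo_unique[OF T(1)] by blast
  then have "(\<Sum>x\<in>T. \<alpha> x *\<^sub>R x) = c *\<^sub>R (\<Sum>x\<in>T. R x *\<^sub>R x)"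
    by (simp add: scaleR_sum_right)
  then have "(\<Sum>x\<in>\<Union>F. \<alpha> x *\<^sub>R x) = - c *\<^sub>R (\<Sum>x\<in>T. R x *\<^sub>R x)"
    using \<alpha> split[of \<alpha>] by (simp add: eq_neg_iff_add_eq_0 add.commute)
  moreover have "(\<Sum>x\<in>\<Union>F. R x *\<^sub>R x) = - (\<Sum>x\<in>T. R x *\<^sub>R x)"
    using R split[of R] by (simp add: eq_neg_iff_add_eq_0 add.commute)
  moreover have "(\<Sum>x\<in>\<Union>F. (c * R x) *\<^sub>R x) = c *\<^sub>R (\<Sum>x\<in>\<Union>F. R x *\<^sub>R x)"
    by (simp add: scaleR_sum_right)
  ultimately have relation: "(\<Sum>x\<in>\<Union>F. (\<alpha> x - c * R x) *\<^sub>R x) = 0"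
    by (simp add: scaleR_left_diff_distrib sum_subtractf)
  then show ?thesis
    using c partial_skeleton_relation[OF F relation] by blast
qed

text \<open>A combination of the merged set lying in span of the remaining blocks extends, by the
  negated representing coefficients there and by 0 at z0, to a relation on T and all blocks.\<close>
lemma partial_skeleton_merge_unique:
  assumes F: "partial_skeleton F \<rho>" and C0: "C0 \<in> F" "z0 \<in> C0"
    and T: "positive_circuit_modulo (\<Union>F) T l" "T \<inter> \<Union>F = {}"
    and \<beta>: "(\<Sum>x\<in>\<Union>F. \<beta> x *\<^sub>R x) = - (\<Sum>t\<in>T. l t *\<^sub>R t)" "\<beta> z0 = 0"
    and \<alpha>: "(\<Sum>x\<in>T \<union> (C0 - {z0}). \<alpha> x *\<^sub>R x) \<in> span (\<Union>(F - {C0}))"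
  shows "\<exists>c. \<forall>t\<in>T \<union> (C0 - {z0}). \<alpha> t = c * (if t \<in> T then l t else \<beta> t)"
proof -
  let ?T0 = "T \<union> (C0 - {z0})" and ?U0 = "\<Union>(F - {C0})"
  have finT: "finite T"
    using positive_circuit_modulo_finite[OF T(1)] .
  obtain \<gamma> where \<gamma>: "(\<Sum>x\<in>?T0. \<alpha> x *\<^sub>R x) = (\<Sum>x\<in>?U0. \<gamma> x *\<^sub>R x)"
    using \<alpha> span_finite[OF finite_Union_partial_skeleton[OF partial_skeleton_Diff[OF F]]] by auto
  define \<alpha>' where "\<alpha>' x = (if x \<in> ?T0 then \<alpha> x else if x = z0 then 0 else - \<gamma> x)" for x
  define R where "R x = (if x \<in> T then l x else \<beta> x)" for x
  have fin: "finite ?T0" "finite ?U0"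
    using finT partial_skeleton_finite_block[OF F C0(1)] finite_Union_partial_skeleton[OF partial_skeleton_Diff[OF F]]
    by auto
  have parts: "T \<union> \<Union>F = insert z0 (?T0 \<union> ?U0)" "z0 \<notin> ?T0 \<union> ?U0" "?T0 \<inter> ?U0 = {}"
    unfolding partial_skeleton_Union_Diff[OF F C0(1)] using C0 T(2) by auto
  then have "(\<Sum>x\<in>T \<union> \<Union>F. \<alpha>' x *\<^sub>R x) = (\<Sum>x\<in>?T0. \<alpha>' x *\<^sub>R x) + (\<Sum>x\<in>?U0. \<alpha>' x *\<^sub>R x)"
    using fin by (simp add: sum.union_disjoint \<alpha>'_def)
  also have "(\<Sum>x\<in>?T0. \<alpha>' x *\<^sub>R x) = (\<Sum>x\<in>?T0. \<alpha> x *\<^sub>R x)"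
    by (intro sum.cong) (auto simp: \<alpha>'_def)
  also have "(\<Sum>x\<in>?U0. \<alpha>' x *\<^sub>R x) = - (\<Sum>x\<in>?U0. \<gamma> x *\<^sub>R x)"
    unfolding sum_negf[symmetric] using parts(2,3) by (intro sum.cong) (auto simp: \<alpha>'_def)
  finally have \<alpha>'_rel: "(\<Sum>x\<in>T \<union> \<Union>F. \<alpha>' x *\<^sub>R x) = 0"
    using \<gamma> by simp
  have "(\<Sum>x\<in>T \<union> \<Union>F. R x *\<^sub>R x) = (\<Sum>x\<in>T. R x *\<^sub>R x) + (\<Sum>x\<in>\<Union>F. R x *\<^sub>R x)"
    using sum.union_disjoint[OF finT finite_Union_partial_skeleton[OF F] T(2)] by simp
  also have "\<dots> = (\<Sum>t\<in>T. l t *\<^sub>R t) + (\<Sum>x\<in>\<Union>F. \<beta> x *\<^sub>R x)"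
    using T(2) unfolding R_def by (intro arg_cong2[where f = "(+)"] sum.cong) auto
  finally have R_rel: "(\<Sum>x\<in>T \<union> \<Union>F. R x *\<^sub>R x) = 0"
    using \<beta>(1) by simp
  have "positive_circuit_modulo (\<Union>F) T R"
    using T(1) positive_circuit_modulo_cong[of T R l] unfolding R_def by simp
  then obtain c where c: "\<forall>t\<in>T. \<alpha>' t = c * R t" "\<forall>C\<in>F. \<exists>d. \<forall>x\<in>C. \<alpha>' x - c * R x = d * \<rho> x"
    using partial_skeleton_extension_relation[OF F _ T(2) R_rel \<alpha>'_rel] by blast
  then obtain d where d: "\<forall>x\<in>C0. \<alpha>' x - c * R x = d * \<rho> x"
    using C0(1) by blast
  have "\<alpha>' z0 = 0" "R z0 = 0" "0 < \<rho> z0"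
    using \<beta>(2) C0 T(2) partial_skeleton_pos[OF F, of z0] unfolding \<alpha>'_def R_def by auto
  then have "d = 0"
    using d C0(2) by force
  then have "\<alpha> x = c * R x" if "x \<in> ?T0" for x
    using that c(1) d unfolding \<alpha>'_def by auto
  then show ?thesis
    unfolding R_def by blast
qed

lemma partial_skeleton_merge_circuit:
  assumes F: "partial_skeleton F \<rho>" and C0: "C0 \<in> F" "z0 \<in> C0"
    and T: "positive_circuit_modulo (\<Union>F) T l" "T \<inter> \<Union>F = {}"
    and \<beta>: "(\<Sum>x\<in>\<Union>F. \<beta> x *\<^sub>R x) = - (\<Sum>t\<in>T. l t *\<^sub>R t)" "\<beta> z0 = 0" "\<forall>x\<in>C0 - {z0}. 0 < \<beta> x"
  shows "positive_circuit_modulo (\<Union>(F - {C0})) (T \<union> (C0 - {z0})) (\<lambda>x. if x \<in> T then l x else \<beta> x)"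
proof -
  have "finite T"
    using positive_circuit_modulo_finite[OF T(1)] .
  have "(\<Sum>x\<in>T \<union> (C0 - {z0}). (if x \<in> T then l x else \<beta> x) *\<^sub>R x) \<in> span (\<Union>(F - {C0}))"
    unfolding partial_skeleton_merged_sum[OF F C0 \<open>finite T\<close> T(2) \<beta>(1,2)]
    by (intro span_neg in_span_sum_scaleR) simp
  moreover have "2 \<le> card (T \<union> (C0 - {z0}))"
    using positive_circuit_modulo_card[OF T(1)] card_mono[of "T \<union> (C0 - {z0})" T] \<open>finite T\<close>
      partial_skeleton_finite_block[OF F C0(1)] by auto
  ultimately show ?thesis
    using T(1) \<beta>(3) \<open>finite T\<close> partial_skeleton_finite_block[OF F C0(1)]
      partial_skeleton_merge_unique[OF F C0 T \<beta>(1,2)]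
    unfolding positive_circuit_modulo_def by auto
qed

text \<open>On each block, a relation supported in T and the support of R differs from a multiple of R
  by a multiple of \<rho>, which vanishes at a zero of R outside the support.\<close>
lemma partial_skeleton_support_unique_relation:
  assumes F: "partial_skeleton F \<rho>" and T: "positive_circuit_modulo (\<Union>F) T R" "T \<inter> \<Union>F = {}"
    and R: "(\<Sum>x\<in>T \<union> \<Union>F. R x *\<^sub>R x) = 0" "\<forall>C\<in>F. \<exists>p\<in>C. R p = 0"
    and \<alpha>: "(\<Sum>x\<in>T \<union> {x\<in>\<Union>F. R x \<noteq> 0}. \<alpha> x *\<^sub>R x) = 0"
  shows "\<exists>c. \<forall>x\<in>T \<union> {x\<in>\<Union>F. R x \<noteq> 0}. \<alpha> x = c * R x"
proof -
  define B where "B = T \<union> {x\<in>\<Union>F. R x \<noteq> 0}"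
  define \<alpha>' where "\<alpha>' x = (if x \<in> B then \<alpha> x else 0)" for x
  have \<alpha>': "(\<Sum>x\<in>T \<union> \<Union>F. \<alpha>' x *\<^sub>R x) = 0"
    unfolding \<alpha>'_def using \<alpha> positive_circuit_modulo_finite[OF T(1)] finite_Union_partial_skeleton[OF F]
    by (subst sum_scaleR_if_subset) (auto simp: B_def)
  obtain c where c: "\<forall>t\<in>T. \<alpha>' t = c * R t" "\<forall>C\<in>F. \<exists>d. \<forall>x\<in>C. \<alpha>' x - c * R x = d * \<rho> x"
    using partial_skeleton_extension_relation[OF F T R(1) \<alpha>'] by blast
  have on_blocks: "\<alpha>' x = c * R x" if C: "C \<in> F" "x \<in> C" for C x
  proof -
    obtain d where d: "\<forall>x\<in>C. \<alpha>' x - c * R x = d * \<rho> x"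
      using c(2) C(1) by blast
    obtain p where p: "p \<in> C" "R p = 0"
      using R(2) C(1) by blast
    then have "p \<notin> B"
      using T(2) C(1) unfolding B_def by blast
    then have "d * \<rho> p = 0"
      using d p unfolding \<alpha>'_def by force
    moreover have "0 < \<rho> p"
      using partial_skeleton_pos[OF F] C(1) p(1) by blast
    ultimately show ?thesis
      using d C(2) by simp
  qed
  have "\<alpha> x = c * R x" if x: "x \<in> B" for x
  proof -
    have "\<alpha>' x = c * R x"
      using x c(1) on_blocks unfolding B_def by blast
    then show ?thesis
      using x unfolding \<alpha>'_def by simp
  qed
  then show ?thesis
    unfolding B_def by blast
qed

section \<open>Construction of a skeleton\<close>

locale good_dependent_set =
  fixes X :: "'a::euclidean_space set"
  assumes finite_X: "finite X"
    and pos_hull_X: "pos_hull X = UNIV"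
    and dependent_imp_good: "A \<subseteq> X \<Longrightarrow> dependent A \<Longrightarrow> good_position A"
begin

text \<open>If the relations among the points of B form a line spanned by R, then R, having two
  positive entries, has only one negative entry: a point of B lies in the positive hull of the
  others, and the corresponding relation is a positive multiple of R.\<close>
lemma unique_relation_single_negative:
  assumes B: "finite B" "B \<subseteq> X" and R: "(\<Sum>x\<in>B. R x *\<^sub>R x) = 0"
    and unique: "\<And>\<alpha>. (\<Sum>x\<in>B. \<alpha> x *\<^sub>R x) = 0 \<Longrightarrow> \<exists>c. \<forall>x\<in>B. \<alpha> x = c * R x"
    and pos: "p1 \<in> B" "p2 \<in> B" "p1 \<noteq> p2" "0 < R p1" "0 < R p2"
    and neg: "q \<in> B" "R q < 0"
  shows "\<forall>x\<in>B - {q}. 0 \<le> R x"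
proof -
  have "dependent B"
    unfolding dependent_finite[OF B(1)] using R pos by (intro exI[of _ R] conjI bexI[of _ p1]) auto
  moreover have "0 \<notin> convex hull B"
  proof
    assume "0 \<in> convex hull B"
    then obtain u where u: "\<forall>x\<in>B. 0 \<le> u x" "sum u B = 1" "(\<Sum>x\<in>B. u x *\<^sub>R x) = 0"
      unfolding convex_hull_finite[OF B(1)] by auto
    then obtain c where c: "\<forall>x\<in>B. u x = c * R x"
      using unique by blast
    have "0 \<le> c * R p1" "0 \<le> c * R q" "sum u B = c * sum R B"
      using c u(1) pos neg by (auto simp: sum_distrib_left)
    moreover have "c = 0"
      using calculation(1,2) pos neg by (auto simp: zero_le_mult_iff)
    ultimately show False
      using u(2) by simp
  qed
  ultimately obtain b where b: "b \<in> B" "b \<in> pos_hull (B - {b})"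
    using pos_hull_remove_if_good_position dependent_imp_good B by blast
  then obtain \<gamma> where \<gamma>: "\<gamma> b = -1" "\<forall>y\<in>B - {b}. 0 \<le> \<gamma> y" "(\<Sum>y\<in>B. \<gamma> y *\<^sub>R y) = 0"
    using relation_if_pos_hull_remove B(1) by blast
  obtain c where c: "\<forall>x\<in>B. \<gamma> x = c * R x"
    using unique[OF \<gamma>(3)] by blast
  obtain p where p: "p \<in> B - {b}" "0 < R p"
    using pos by (cases "p1 = b") auto
  have "0 \<le> c * R p"
    using c \<gamma>(2) p by auto
  then have "0 \<le> c"
    using p(2) by (simp add: zero_le_mult_iff)
  moreover have "c \<noteq> 0"
    using c \<gamma>(1) b(1) by force
  ultimately have "0 < c"
    by simp
  then have "0 \<le> R x" if "x \<in> B - {b}" for x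
    using c \<gamma>(2) that by (auto simp: zero_le_mult_iff)
  moreover have "q = b"
    using calculation neg by force
  ultimately show ?thesis
    by blast
qed


lemma extension_relation_single_negative:
  assumes F: "partial_skeleton F \<rho>" "\<Union>F \<subseteq> X"
    and T: "positive_circuit_modulo (\<Union>F) T R" "T \<subseteq> X" "T \<inter> \<Union>F = {}"
    and R: "(\<Sum>x\<in>T \<union> \<Union>F. R x *\<^sub>R x) = 0" "\<forall>C\<in>F. \<exists>p\<in>C. R p = 0"
    and q: "q \<in> \<Union>F" "R q < 0"
  shows "\<forall>x\<in>\<Union>F - {q}. 0 \<le> R x"
proof -
  define B where "B = T \<union> {x\<in>\<Union>F. R x \<noteq> 0}"
  have finU: "finite (\<Union>F)"
    using finite_Union_partial_skeleton[OF F(1)] .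
  have "B \<subseteq> T \<union> \<Union>F"
    unfolding B_def by blast
  then have finB: "finite B"
    using positive_circuit_modulo_finite[OF T(1)] finU finite_subset by blast
  have "(\<Sum>x\<in>B. R x *\<^sub>R x) = (\<Sum>x\<in>T \<union> \<Union>F. R x *\<^sub>R x)"
    unfolding B_def using positive_circuit_modulo_finite[OF T(1)] finU by (intro sum.mono_neutral_left) auto
  then have R_B: "(\<Sum>x\<in>B. R x *\<^sub>R x) = 0"
    using R(1) by simp
  have unique_B: "\<exists>c. \<forall>x\<in>B. \<alpha> x = c * R x" if "(\<Sum>x\<in>B. \<alpha> x *\<^sub>R x) = 0" for \<alpha>
    using partial_skeleton_support_unique_relation[OF F(1) T(1,3) R, of \<alpha>] that unfolding B_def by blast
  obtain p1 p2 where p: "p1 \<in> T" "p2 \<in> T" "p1 \<noteq> p2"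
    using positive_circuit_modulo_card[OF T(1)] card_le_Suc0_iff_eq[OF positive_circuit_modulo_finite[OF T(1)]]
    by (metis not_less_eq_eq numeral_2_eq_2)
  have "B \<subseteq> X" "T \<subseteq> B" "q \<in> B"
    unfolding B_def using T(2) F(2) q by auto
  then have "\<forall>x\<in>B - {q}. 0 \<le> R x"
    using unique_relation_single_negative[OF finB _ R_B unique_B _ _ p(3) _ _ _ q(2)] p
      positive_circuit_modulo_pos[OF T(1)] by blast
  then show ?thesis
    unfolding B_def by force
qed

text \<open>Let r be the largest ratio of \<beta> to \<rho> on C0. The relation that is l on T, \<beta> - r \<rho> on C0
  and \<beta> on the other blocks has zeros in every block and is negative at every zero of \<beta> in C0,
  so there is only one such zero.\<close>
lemma nonneg_representation_single_zero:
  assumes F: "partial_skeleton F \<rho>" "\<Union>F \<subseteq> X"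
    and T: "positive_circuit_modulo (\<Union>F) T l" "T \<subseteq> X" "T \<inter> \<Union>F = {}"
    and \<beta>: "(\<Sum>x\<in>\<Union>F. \<beta> x *\<^sub>R x) = - (\<Sum>t\<in>T. l t *\<^sub>R t)" "\<forall>x\<in>\<Union>F. 0 \<le> \<beta> x"
      "\<forall>C\<in>F. \<exists>z\<in>C. \<beta> z = 0"
    and C0: "C0 \<in> F" "x1 \<in> C0" "\<beta> x1 \<noteq> 0"
  shows "\<exists>z0\<in>C0. \<beta> z0 = 0 \<and> (\<forall>x\<in>C0 - {z0}. 0 < \<beta> x)"
proof -
  have C0U: "C0 \<subseteq> \<Union>F"
    using C0(1) by blast
  have \<rho>: "\<forall>x\<in>C0. 0 < \<rho> x"
    using partial_skeleton_pos[OF F(1)] C0U by blast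
  obtain r s where r: "0 < r" "s \<in> C0" "\<beta> s = r * \<rho> s" "\<forall>x\<in>C0. \<beta> x \<le> r * \<rho> x"
    using exists_max_ratio[OF partial_skeleton_finite_block[OF F(1) C0(1)] C0(2) _ \<rho>] \<beta>(2) C0 C0U
    by (metis less_eq_real_def subsetD)
  obtain z0 where z0: "z0 \<in> C0" "\<beta> z0 = 0"
    using \<beta>(3) C0(1) by blast
  define R where "R x = (if x \<in> T then l x else if x \<in> C0 then \<beta> x - r * \<rho> x else \<beta> x)" for x
  have R_U: "R x = (if x \<in> C0 then \<beta> x - r * \<rho> x else \<beta> x)" if "x \<in> \<Union>F" for x
    using T(3) that unfolding R_def by auto
  have R_rel: "(\<Sum>x\<in>T \<union> \<Union>F. R x *\<^sub>R x) = 0"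
    unfolding R_def using partial_skeleton_shift_relation[OF F(1) C0(1) positive_circuit_modulo_finite[OF T(1)] T(3) \<beta>(1)] .
  have "\<exists>p\<in>C. R p = 0" if C: "C \<in> F" for C
  proof (cases "C = C0")
    case False
    then obtain z where "z \<in> C" "\<beta> z = 0" "z \<notin> C0"
      using \<beta>(3) partial_skeleton_disjoint[OF F(1) C C0(1)] C by blast
    then show ?thesis
      using R_U[of z] C by auto
  next
    case True
    have "R s = 0"
      using R_U[of s] r(2,3) C0U by auto
    then show ?thesis
      using True r(2) by blast
  qed
  moreover have "positive_circuit_modulo (\<Union>F) T R"
    using T(1) positive_circuit_modulo_cong[of T R l] unfolding R_def by simp
  moreover have "R z0 < 0"
  proof -
    have "R z0 = - (r * \<rho> z0)"
      using R_U[of z0] z0 C0U by auto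
    then show ?thesis
      using \<rho> z0(1) r(1) by simp
  qed
  ultimately have "\<forall>x\<in>\<Union>F - {z0}. 0 \<le> R x"
    using extension_relation_single_negative[OF F _ T(2,3) R_rel] z0(1) C0U by blast
  then have "0 < \<beta> x" if x: "x \<in> C0 - {z0}" for x
  proof -
    have xU: "x \<in> \<Union>F - {z0}"
      using x C0U by blast
    then have "0 \<le> R x"
      using \<open>\<forall>x\<in>\<Union>F - {z0}. 0 \<le> R x\<close> by blast
    moreover have "R x = \<beta> x - r * \<rho> x"
      using R_U xU x by simp
    moreover have "\<beta> x \<le> r * \<rho> x" "0 < r * \<rho> x"
      using r(1,4) \<rho> x by auto
    ultimately show ?thesis
      by linarith
  qed
  then show ?thesis
    using z0 by blast
qed

text \<open>If the l-weighted sum of T is not zero, the block of its nonnegative representation meeting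
  the support loses its single zero z0 and the rest of it merges into T. As z0 is spanned by the
  rest of its block, the span is unchanged, and we recurse on fewer blocks.\<close>
lemma partial_skeleton_absorb:
  "partial_skeleton F \<rho> \<Longrightarrow> \<Union>F \<subseteq> X \<Longrightarrow> positive_circuit_modulo (\<Union>F) T l \<Longrightarrow> T \<subseteq> X \<Longrightarrow>
   T \<inter> \<Union>F = {} \<Longrightarrow>
   \<exists>F' \<rho>'. partial_skeleton F' \<rho>' \<and> \<Union>F' \<subseteq> \<Union>F \<union> T \<and> span (\<Union>F') = span (\<Union>F \<union> T)"
proof (induction "card F" arbitrary: F \<rho> T l rule: less_induct)
  case less
  note F = less.prems(1,2) and T = less.prems(3-5)
  show ?case
  proof (cases "(\<Sum>t\<in>T. l t *\<^sub>R t) = 0")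
    case True
    then show ?thesis
      using partial_skeleton_insert[OF F(1) T(1,3) True]
      by (intro exI[of _ "insert T F"] exI[of _ "\<lambda>x. if x \<in> T then l x else \<rho> x"]) (auto simp: Un_commute)
  next
    case False
    obtain \<beta> where \<beta>: "(\<Sum>x\<in>\<Union>F. \<beta> x *\<^sub>R x) = - (\<Sum>t\<in>T. l t *\<^sub>R t)" "\<forall>x\<in>\<Union>F. 0 \<le> \<beta> x"
      "\<forall>C\<in>F. \<exists>z\<in>C. \<beta> z = 0"
      using partial_skeleton_nonneg_representation[OF F(1) span_neg[OF positive_circuit_modulo_in_span[OF T(1)]]]
      by blast
    then obtain C0 x1 where C0: "C0 \<in> F" "x1 \<in> C0" "\<beta> x1 \<noteq> 0"
      using False by (metis (no_types, lifting) UnionE neg_equal_0_iff_equal scale_eq_0_iff sum.neutral)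
    obtain z0 where z0: "z0 \<in> C0" "\<beta> z0 = 0" "\<forall>x\<in>C0 - {z0}. 0 < \<beta> x"
      using nonneg_representation_single_zero[OF F T \<beta> C0] by blast
    define T0 where "T0 = T \<union> (C0 - {z0})"
    have "card (F - {C0}) < card F"
      using card_Diff1_less[OF partial_skeleton_finite[OF F(1)] C0(1)] .
    moreover have "partial_skeleton (F - {C0}) \<rho>" "\<Union>(F - {C0}) \<subseteq> X"
      using partial_skeleton_Diff[OF F(1)] F(2) by auto
    moreover have "positive_circuit_modulo (\<Union>(F - {C0})) T0 (\<lambda>x. if x \<in> T then l x else \<beta> x)"
      unfolding T0_def using partial_skeleton_merge_circuit[OF F(1) C0(1) z0(1) T(1,3) \<beta>(1) z0(2,3)] .
    moreover have "T0 \<subseteq> X" "T0 \<inter> \<Union>(F - {C0}) = {}"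
      using F(2) T(2,3) C0(1) partial_skeleton_Union_Diff[OF F(1) C0(1)] unfolding T0_def by auto
    ultimately have "\<exists>F' \<rho>'. partial_skeleton F' \<rho>' \<and> \<Union>F' \<subseteq> \<Union>(F - {C0}) \<union> T0 \<and>
        span (\<Union>F') = span (\<Union>(F - {C0}) \<union> T0)"
      by (rule less.hyps)
    then obtain F' \<rho>' where F': "partial_skeleton F' \<rho>'" "\<Union>F' \<subseteq> \<Union>(F - {C0}) \<union> T0"
      "span (\<Union>F') = span (\<Union>(F - {C0}) \<union> T0)"
      by blast
    have merged: "\<Union>(F - {C0}) \<union> T0 = (\<Union>F \<union> T) - {z0}"
      unfolding partial_skeleton_Union_Diff[OF F(1) C0(1)] T0_def using z0(1) C0(1) T(3) by blast
    have "z0 \<in> \<Union>F \<union> T" "z0 \<in> span ((\<Union>F \<union> T) - {z0})"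
      using partial_skeleton_in_span_block_remove[OF F(1) C0(1) z0(1)] C0(1) z0(1)
        span_mono[of "C0 - {z0}" "(\<Union>F \<union> T) - {z0}"] by blast+
    then have "span ((\<Union>F \<union> T) - {z0}) = span (\<Union>F \<union> T)"
      using span_redundant[of z0 "(\<Union>F \<union> T) - {z0}"] by (simp add: insert_absorb)
    then show ?thesis
      using F' unfolding merged by (intro exI[of _ F'] exI[of _ \<rho>']) auto
  qed
qed

lemma span_X: "span X = UNIV"
  using pos_hull_UNIV_imp_span_UNIV[OF pos_hull_X] .

text \<open>Some x outside S has -x in the positive hull of X, which gives a positive
  combination of points outside S lying in S; we take a minimal one.\<close>
lemma minimal_positive_combination_outside:
  assumes S: "subspace S" "S \<noteq> UNIV"
  obtains T l where "T \<subseteq> X - S" "T \<noteq> {}" "\<forall>t\<in>T. 0 < l t" "(\<Sum>t\<in>T. l t *\<^sub>R t) \<in> S"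
    "\<And>T' l'. T' \<subset> T \<Longrightarrow> T' \<noteq> {} \<Longrightarrow> \<forall>t\<in>T'. 0 < l' t \<Longrightarrow> (\<Sum>t\<in>T'. l' t *\<^sub>R t) \<notin> S"
proof -
  define P where "P T \<longleftrightarrow> T \<noteq> {} \<and> (\<exists>l. (\<forall>t\<in>T. 0 < l t) \<and> (\<Sum>t\<in>T. l t *\<^sub>R t) \<in> S)" for T
  obtain x where x: "x \<in> X" "x \<notin> S"
    using S span_X by (metis span_minimal subsetI top.extremum_uniqueI)
  have "- x \<in> pos_hull X"
    using pos_hull_X by simp
  then obtain u where u: "\<forall>y\<in>X. 0 \<le> u y" "- x = (\<Sum>y\<in>X. u y *\<^sub>R y)"
    unfolding pos_hull_finite[OF finite_X] by blast
  define l where "l = u(x := u x + 1)"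
  have "(\<Sum>y\<in>X. l y *\<^sub>R y) = 0"
    using u(2)[symmetric] x(1) finite_X unfolding l_def by (simp add: sum.remove scaleR_left_distrib algebra_simps)
  have l_nonneg: "0 \<le> l y" if "y \<in> X" for y
    using u(1) that x(1) unfolding l_def by (simp add: add_nonneg_nonneg)
  define T1 where "T1 = {y\<in>X - S. 0 < l y}"
  have "(\<Sum>y\<in>X - T1. l y *\<^sub>R y) \<in> S"
  proof (intro subspace_sum[OF S(1)])
    fix y assume "y \<in> X - T1"
    then have "y \<in> S \<or> l y = 0"
      using l_nonneg[of y] unfolding T1_def by force
    then show "l y *\<^sub>R y \<in> S"
      using S(1) by (auto simp: subspace_scale subspace_0)
  qed
  moreover have "(\<Sum>y\<in>X - T1. l y *\<^sub>R y) + (\<Sum>y\<in>T1. l y *\<^sub>R y) = 0"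
    using \<open>(\<Sum>y\<in>X. l y *\<^sub>R y) = 0\<close> sum.subset_diff[of T1 X "\<lambda>y. l y *\<^sub>R y"] finite_X
    unfolding T1_def by auto
  ultimately have "(\<Sum>y\<in>T1. l y *\<^sub>R y) \<in> S"
    using subspace_neg[OF S(1)] by (metis add.commute eq_neg_iff_add_eq_0)
  moreover have "x \<in> T1"
    using x u(1) unfolding T1_def l_def by (simp add: add_nonneg_pos)
  ultimately have "P T1"
    unfolding P_def T1_def by blast
  moreover have "finite T1"
    using finite_X unfolding T1_def by simp
  ultimately obtain T where T: "T \<subseteq> T1" "P T" "\<forall>T'\<subset>T. \<not> P T'"
    using finite_minimal_subset[of T1 P] by blast
  then obtain l where "\<forall>t\<in>T. 0 < l t" "(\<Sum>t\<in>T. l t *\<^sub>R t) \<in> S"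
    unfolding P_def by blast
  moreover have "T \<subseteq> X - S" "T \<noteq> {}"
    using T unfolding T1_def P_def by auto
  ultimately show ?thesis
    using that[of T l] T(3) unfolding P_def by blast
qed

lemma exists_positive_circuit_modulo:
  assumes "span S \<noteq> UNIV"
  obtains T l where "T \<subseteq> X - span S" "positive_circuit_modulo S T l"
proof -
  obtain T l where T: "T \<subseteq> X - span S" "T \<noteq> {}" and l: "\<forall>t\<in>T. 0 < l t" "(\<Sum>t\<in>T. l t *\<^sub>R t) \<in> span S"
    and minimal: "\<And>T' l'. T' \<subset> T \<Longrightarrow> T' \<noteq> {} \<Longrightarrow> \<forall>t\<in>T'. 0 < l' t \<Longrightarrow> (\<Sum>t\<in>T'. l' t *\<^sub>R t) \<notin> span S"
    using minimal_positive_combination_outside[OF subspace_span assms] by blast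
  have finT: "finite T"
    using T(1) finite_subset[OF _ finite_X] by blast
  have "2 \<le> card T"
  proof (rule ccontr)
    assume "\<not> 2 \<le> card T"
    moreover have "card T \<noteq> 0"
      using T(2) finT by simp
    ultimately obtain t where t: "T = {t}"
      by (metis One_nat_def card_1_singletonE less_2_cases_iff not_less)
    then have "l t *\<^sub>R t \<in> span S"
      using l(2) by simp
    then have "(1 / l t) *\<^sub>R (l t *\<^sub>R t) \<in> span S"
      by (rule span_scale)
    then show False
      using l(1) T(1) t by simp
  qed
  then show ?thesis
    using that[OF T(1)] finT l minimal_positive_combination_unique[OF subspace_span finT l minimal]
    unfolding positive_circuit_modulo_def by blast
qed

lemma partial_skeleton_grow:
  assumes F: "partial_skeleton F \<rho>" "\<Union>F \<subseteq> X" and "span (\<Union>F) \<noteq> UNIV"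
  obtains F' \<rho>' where "partial_skeleton F' \<rho>'" "\<Union>F' \<subseteq> X" "span (\<Union>F) \<subset> span (\<Union>F')"
proof -
  obtain T l where T: "T \<subseteq> X - span (\<Union>F)" "positive_circuit_modulo (\<Union>F) T l"
    using exists_positive_circuit_modulo[OF assms(3)] by blast
  have "T \<inter> \<Union>F = {}"
    using T(1) span_superset[of "\<Union>F"] by blast
  then obtain F' \<rho>' where F': "partial_skeleton F' \<rho>'" "\<Union>F' \<subseteq> \<Union>F \<union> T" "span (\<Union>F') = span (\<Union>F \<union> T)"
    using partial_skeleton_absorb[OF F T(2)] T(1) by blast
  obtain t where "t \<in> T"
    using positive_circuit_modulo_card[OF T(2)] by fastforce
  then have "span (\<Union>F) \<subset> span (\<Union>F \<union> T)"
    using T(1) span_mono[of "\<Union>F" "\<Union>F \<union> T"] span_base[of t "\<Union>F \<union> T"] by blast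
  moreover have "\<Union>F' \<subseteq> X"
    using F'(2) F(2) T(1) by blast
  ultimately show ?thesis
    using that[OF F'(1)] F'(3) by simp
qed

lemma exists_skeleton:
  obtains F \<rho> where "partial_skeleton F \<rho>" "\<Union>F \<subseteq> X" "span (\<Union>F) = UNIV"
proof -
  have "partial_skeleton F \<rho> \<Longrightarrow> \<Union>F \<subseteq> X \<Longrightarrow> \<exists>F' \<rho>'. partial_skeleton F' \<rho>' \<and> \<Union>F' \<subseteq> X \<and> span (\<Union>F') = UNIV"
    for F :: "'a set set" and \<rho>
  proof (induction "DIM('a) - dim (\<Union>F)" arbitrary: F \<rho> rule: less_induct)
    case less
    show ?case
    proof (cases "span (\<Union>F) = UNIV")
      case False
      then obtain F' \<rho>' where F': "partial_skeleton F' \<rho>'" "\<Union>F' \<subseteq> X" "span (\<Union>F) \<subset> span (\<Union>F')"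
        using partial_skeleton_grow less.prems by blast
      then have "dim (\<Union>F) < dim (\<Union>F')"
        by (metis dim_psubset dim_span)
      then have "DIM('a) - dim (\<Union>F') < DIM('a) - dim (\<Union>F)"
        using dim_subset_UNIV[of "\<Union>F'"] by linarith
      then show ?thesis
        using less.hyps F'(1,2) by blast
    qed (use less.prems in blast)
  qed
  then show ?thesis
    using that partial_skeleton_empty by blast
qed
end

theorem theorem1p3:
  fixes X :: "'a::euclidean_space set"
  assumes "finite X"
    and "0 \<notin> X"
    and "0 \<in> interior (convex hull X)"
    and "\<forall>x\<in>X. \<forall>y\<in>X. \<forall>c::real. c > 0 \<and> y = c *\<^sub>R x \<longrightarrow> y = x"
    and "\<forall>A. A \<subseteq> X \<and> card A = DIM('a) + 1 \<longrightarrow> good_position A"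
  shows "\<exists>k::nat. \<exists>Xs :: nat \<Rightarrow> 'a set. k \<ge> 1 \<and>
           (\<forall>i<k. Xs i \<subseteq> X) \<and>
           (\<forall>i<k. \<forall>j<k. i \<noteq> j \<longrightarrow> Xs i \<inter> Xs j = {}) \<and>
           (\<forall>i<k. \<not> affine_dependent (Xs i) \<and> 0 \<in> rel_interior (convex hull (Xs i))) \<and>
           (\<forall>v :: nat \<Rightarrow> 'a. (\<forall>i<k. v i \<in> span (Xs i)) \<and> (\<Sum>i<k. v i) = 0
                \<longrightarrow> (\<forall>i<k. v i = 0)) \<and>
           span (\<Union>i<k. Xs i) = UNIV"
proof -
  have pos_hull: "pos_hull X = UNIV"
    using pos_hull_UNIV_if_interior_convex_hull assms(1,3) by blast
  interpret good_dependent_set X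
    using assms(1) pos_hull good_position_if_dependent[OF pos_hull_UNIV_imp_span_UNIV[OF pos_hull] assms(5)]
      finite_subset by unfold_locales blast+
  obtain F \<rho> where F: "partial_skeleton F \<rho>" "\<Union>F \<subseteq> X" "span (\<Union>F) = UNIV"
    by (rule exists_skeleton)
  obtain k :: nat and Xs where Xs: "1 \<le> k" "\<forall>i<k. Xs i \<in> F" "(\<Union>i<k. Xs i) = \<Union>F"
    "\<forall>i<k. \<forall>j<k. i \<noteq> j \<longrightarrow> Xs i \<inter> Xs j = {}"
    "\<forall>v. (\<forall>i<k. v i \<in> span (Xs i)) \<and> (\<Sum>i<k. v i) = 0 \<longrightarrow> (\<forall>i<k. v i = 0)"
    by (rule partial_skeleton_enumerate[OF F(1,3)])
  moreover have "\<forall>i<k. Xs i \<subseteq> X"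
    using Xs(2) F(2) by blast
  moreover have "\<forall>i<k. \<not> affine_dependent (Xs i) \<and> 0 \<in> rel_interior (convex hull (Xs i))"
    using Xs(2) partial_skeleton_block_simplex[OF F(1)] by blast
  ultimately show ?thesis
    using F(3) by (intro exI[of _ k] exI[of _ Xs]) auto
qed

end
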